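(* Let $R$ be a commutative ring with identity. Then $R$ is semi-complemented if and only if its classical ring of quotients $q(R)$ is semi-complemented.
   Context: $\mathfrak{N}(R)$ is the nilradical and $\mathrm{reg}(R)$ the set of regular elements (non-zero-divisors); $q(R)$ is the localization of $R$ at $\mathrm{reg}(R)$. An element $a$ is complemented if there is $b$ with $ab=0$ and $a+b\in\mathrm{reg}(R)$. $R$ is semi-complemented if every element of $R\setminus\mathfrak{N}(R)$ is complemented. *)

theory Defs
  imports "HOL-Algebra.Algebra"
begin

definition nilradical :: "('a, 'b) ring_scheme \<Rightarrow> 'a set" where
  "nilradical R = {a \<in> carrier R. \<exists>n::nat. a [^]\<^bsub>R\<^esub> n = \<zero>\<^bsub>R\<^esub>}"

definition regular :: "('a, 'b) ring_scheme \<Rightarrow> 'a set" where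
  "regular R = {a \<in> carrier R. \<forall>b \<in> carrier R. a \<otimes>\<^bsub>R\<^esub> b = \<zero>\<^bsub>R\<^esub> \<longrightarrow> b = \<zero>\<^bsub>R\<^esub>}"

definition complemented :: "('a, 'b) ring_scheme \<Rightarrow> 'a \<Rightarrow> bool" where
  "complemented R a \<longleftrightarrow>
     (\<exists>b \<in> carrier R. a \<otimes>\<^bsub>R\<^esub> b = \<zero>\<^bsub>R\<^esub> \<and> a \<oplus>\<^bsub>R\<^esub> b \<in> regular R)"

definition semi_complemented :: "('a, 'b) ring_scheme \<Rightarrow> bool" where
  "semi_complemented R \<longleftrightarrow> (\<forall>a \<in> carrier R - nilradical R. complemented R a)"

text \<open>Classical ring of quotients q(R) = localization of R at regular R:
  pairs (a, s) with s regular, modulo (a,s) ~ (b,t) iff u(at - bs) = 0 for some regular u.\<close>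
definition frac_rel :: "('a, 'b) ring_scheme \<Rightarrow> (('a \<times> 'a) \<times> ('a \<times> 'a)) set" where
  "frac_rel R = {((a, s), (b, t)). (a, s) \<in> carrier R \<times> regular R \<and> (b, t) \<in> carrier R \<times> regular R \<and>
      (\<exists>u \<in> regular R. u \<otimes>\<^bsub>R\<^esub> ((a \<otimes>\<^bsub>R\<^esub> t) \<ominus>\<^bsub>R\<^esub> (b \<otimes>\<^bsub>R\<^esub> s)) = \<zero>\<^bsub>R\<^esub>)}"

definition frac :: "('a, 'b) ring_scheme \<Rightarrow> 'a \<Rightarrow> 'a \<Rightarrow> ('a \<times> 'a) set" where
  "frac R a s = frac_rel R `` {(a, s)}"

definition q_mult :: "('a, 'b) ring_scheme \<Rightarrow> ('a \<times> 'a) set \<Rightarrow> ('a \<times> 'a) set \<Rightarrow> ('a \<times> 'a) set" where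
  "q_mult R P Q = \<Union>{frac R (a \<otimes>\<^bsub>R\<^esub> b) (s \<otimes>\<^bsub>R\<^esub> t) | a s b t. (a, s) \<in> P \<and> (b, t) \<in> Q}"

definition q_add :: "('a, 'b) ring_scheme \<Rightarrow> ('a \<times> 'a) set \<Rightarrow> ('a \<times> 'a) set \<Rightarrow> ('a \<times> 'a) set" where
  "q_add R P Q = \<Union>{frac R ((a \<otimes>\<^bsub>R\<^esub> t) \<oplus>\<^bsub>R\<^esub> (b \<otimes>\<^bsub>R\<^esub> s)) (s \<otimes>\<^bsub>R\<^esub> t) | a s b t. (a, s) \<in> P \<and> (b, t) \<in> Q}"

definition q_ring :: "('a, 'b) ring_scheme \<Rightarrow> ('a \<times> 'a) set ring" where
  "q_ring R = \<lparr> carrier = (carrier R \<times> regular R) // frac_rel R,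
     monoid.mult = q_mult R, one = frac R \<one>\<^bsub>R\<^esub> \<one>\<^bsub>R\<^esub>,
     ring.zero = frac R \<zero>\<^bsub>R\<^esub> \<one>\<^bsub>R\<^esub>, ring.add = q_add R \<rparr>"

end

theory Submission
  imports Defs
begin

text \<open>Every element of q(R) is a fraction a/s with s regular, and since s can be cancelled,
  a/s is zero, nilpotent or regular exactly when a is. A complement b of a gives the complement
  b/s of a/s. Conversely, a complement b/t of a/s gives a b = 0 with a t + b s regular, and then
  b s complements a in R: if (a + b s) y = 0, multiplying by a and by b s shows that a a y and
  (b s) (b s) y vanish, hence so does (a t + b s) (a t + b s) y, and so y = 0.\<close>

context cring
begin

lemma regular_closed: "s \<in> regular R \<Longrightarrow> s \<in> carrier R"
  by (simp add: regular_def)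

lemma regular_mult_zeroD: "s \<in> regular R \<Longrightarrow> x \<in> carrier R \<Longrightarrow> s \<otimes> x = \<zero> \<Longrightarrow> x = \<zero>"
  by (simp add: regular_def)

lemma one_regular: "\<one> \<in> regular R"
  by (simp add: regular_def)

lemma regular_mult:
  assumes s: "s \<in> regular R" and t: "t \<in> regular R"
  shows "s \<otimes> t \<in> regular R"
  unfolding regular_def
proof (intro CollectI conjI ballI impI)
  have [simp]: "s \<in> carrier R" "t \<in> carrier R" using s t by (simp_all add: regular_closed)
  show "s \<otimes> t \<in> carrier R" by simp
  fix x assume x: "x \<in> carrier R" "s \<otimes> t \<otimes> x = \<zero>"
  then have "t \<otimes> x = \<zero>" using regular_mult_zeroD[OF s] by (simp add: m_assoc)
  then show "x = \<zero>" using regular_mult_zeroD[OF t] x by simp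
qed

lemma regular_pow: "s \<in> regular R \<Longrightarrow> s [^] (n::nat) \<in> regular R"
  by (induct n) (simp_all add: one_regular regular_mult)

lemma regular_mult_left_cancel:
  assumes s: "s \<in> regular R" and [simp]: "x \<in> carrier R" "y \<in> carrier R"
    and eq: "s \<otimes> x = s \<otimes> y"
  shows "x = y"
proof -
  have [simp]: "s \<in> carrier R" using s by (rule regular_closed)
  have "s \<otimes> (x \<ominus> y) = s \<otimes> x \<ominus> s \<otimes> y"
    using assms \<open>s \<in> carrier R\<close> by algebra
  then have "s \<otimes> (x \<ominus> y) = \<zero>" using eq by simp
  then have "x \<ominus> y = \<zero>" using regular_mult_zeroD[OF s] by simp
  then show ?thesis by simp
qed

lemma regular_add_of_mult_eq_zero:
  assumes carr [simp]: "a \<in> carrier R" "b \<in> carrier R" "t \<in> carrier R"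
    and ab: "a \<otimes> b = \<zero>" and reg: "a \<otimes> t \<oplus> b \<in> regular R"
  shows "a \<oplus> b \<in> regular R"
  unfolding regular_def
proof (intro CollectI conjI ballI impI)
  show "a \<oplus> b \<in> carrier R" by simp
  fix y assume yc [simp]: "y \<in> carrier R" and y: "(a \<oplus> b) \<otimes> y = \<zero>"
  have "a \<otimes> a \<otimes> y = a \<otimes> ((a \<oplus> b) \<otimes> y) \<ominus> a \<otimes> b \<otimes> y"
    using carr yc by algebra
  then have aay: "a \<otimes> a \<otimes> y = \<zero>" using ab y by simp
  have "b \<otimes> b \<otimes> y = b \<otimes> ((a \<oplus> b) \<otimes> y) \<ominus> a \<otimes> b \<otimes> y"
    using carr yc by algebra
  then have bby: "b \<otimes> b \<otimes> y = \<zero>" using ab y by simp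
  have "(a \<otimes> t \<oplus> b) \<otimes> ((a \<otimes> t \<oplus> b) \<otimes> y) =
      t \<otimes> t \<otimes> (a \<otimes> a \<otimes> y) \<oplus> b \<otimes> b \<otimes> y \<oplus> t \<otimes> (a \<otimes> b) \<otimes> y \<oplus> t \<otimes> (a \<otimes> b) \<otimes> y"
    using carr yc by algebra
  then have "(a \<otimes> t \<oplus> b) \<otimes> ((a \<otimes> t \<oplus> b) \<otimes> y) = \<zero>" using aay bby ab by simp
  then have "(a \<otimes> t \<oplus> b) \<otimes> y = \<zero>" using regular_mult_zeroD[OF reg] by simp
  then show "y = \<zero>" using regular_mult_zeroD[OF reg] by simp
qed

lemma frac_rel_iff:
  assumes [simp]: "a \<in> carrier R" "s \<in> regular R" "b \<in> carrier R" "t \<in> regular R"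
  shows "((a, s), (b, t)) \<in> frac_rel R \<longleftrightarrow> a \<otimes> t = b \<otimes> s"
proof
  have [simp]: "s \<in> carrier R" "t \<in> carrier R" by (simp_all add: regular_closed)
  assume "((a, s), (b, t)) \<in> frac_rel R"
  then obtain u where "u \<in> regular R" "u \<otimes> (a \<otimes> t \<ominus> b \<otimes> s) = \<zero>"
    unfolding frac_rel_def by auto
  then have "a \<otimes> t \<ominus> b \<otimes> s = \<zero>" by (simp add: regular_mult_zeroD)
  then show "a \<otimes> t = b \<otimes> s" by simp
next
  have [simp]: "s \<in> carrier R" "t \<in> carrier R" by (simp_all add: regular_closed)
  assume "a \<otimes> t = b \<otimes> s"
  then have "\<one> \<otimes> (a \<otimes> t \<ominus> b \<otimes> s) = \<zero>" by simp
  then show "((a, s), (b, t)) \<in> frac_rel R"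
    unfolding frac_rel_def using one_regular assms by blast
qed

lemma frac_rel_domain:
  "((a, s), (b, t)) \<in> frac_rel R \<Longrightarrow> a \<in> carrier R \<and> s \<in> regular R \<and> b \<in> carrier R \<and> t \<in> regular R"
  unfolding frac_rel_def by auto

lemma equiv_frac_rel: "equiv (carrier R \<times> regular R) (frac_rel R)"
proof (rule equivI)
  show "refl_on (carrier R \<times> regular R) (frac_rel R)"
    by (rule refl_onI) (auto simp: frac_rel_iff)
  show "sym (frac_rel R)"
  proof (rule symI, clarify)
    fix a s b t assume rel: "((a, s), (b, t)) \<in> frac_rel R"
    then show "((b, t), (a, s)) \<in> frac_rel R"
      using frac_rel_domain[OF rel] frac_rel_iff by metis
  qed
  show "trans (frac_rel R)"
  proof (rule transI, clarify)
    fix a s b t c w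
    assume ab: "((a, s), (b, t)) \<in> frac_rel R" and bc: "((b, t), (c, w)) \<in> frac_rel R"
    have dom [simp]: "a \<in> carrier R" "s \<in> regular R" "b \<in> carrier R" "t \<in> regular R"
      "c \<in> carrier R" "w \<in> regular R"
      using frac_rel_domain[OF ab] frac_rel_domain[OF bc] by auto
    have carr [simp]: "s \<in> carrier R" "t \<in> carrier R" "w \<in> carrier R"
      by (simp_all add: regular_closed)
    have "t \<otimes> (a \<otimes> w) = (a \<otimes> t) \<otimes> w" using carr dom by algebra
    also have "\<dots> = s \<otimes> (b \<otimes> w)" using ab by (simp add: frac_rel_iff m_ac)
    also have "\<dots> = s \<otimes> (c \<otimes> t)" using bc by (simp add: frac_rel_iff)
    also have "\<dots> = t \<otimes> (c \<otimes> s)" using carr dom by algebra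
    finally have "a \<otimes> w = c \<otimes> s"
      using regular_mult_left_cancel[OF dom(4)] by simp
    then show "((a, s), (c, w)) \<in> frac_rel R" by (simp add: frac_rel_iff)
  qed
qed (auto simp: frac_rel_def)

lemma mem_frac_iff: "(b, t) \<in> frac R a s \<longleftrightarrow> ((a, s), (b, t)) \<in> frac_rel R"
  by (simp add: frac_def)

lemma frac_eq_iff:
  assumes "a \<in> carrier R" "s \<in> regular R" "b \<in> carrier R" "t \<in> regular R"
  shows "frac R a s = frac R b t \<longleftrightarrow> a \<otimes> t = b \<otimes> s"
  unfolding frac_def using eq_equiv_class_iff[OF equiv_frac_rel] assms
  by (simp add: frac_rel_iff)

lemma carrier_q_ring: "carrier (q_ring R) = {frac R a s | a s. a \<in> carrier R \<and> s \<in> regular R}"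
  unfolding q_ring_def quotient_def frac_def by auto

lemma frac_in_carrier_q_ring: "a \<in> carrier R \<Longrightarrow> s \<in> regular R \<Longrightarrow> frac R a s \<in> carrier (q_ring R)"
  by (auto simp: carrier_q_ring)

lemma Union_frac_representatives:
  assumes "a \<in> carrier R" "s \<in> regular R" "b \<in> carrier R" "t \<in> regular R"
    and compat: "\<And>a' s' b' t'. ((a, s), (a', s')) \<in> frac_rel R \<Longrightarrow> ((b, t), (b', t')) \<in> frac_rel R \<Longrightarrow>
      F a' s' b' t' = F a s b t"
  shows "\<Union>{F a' s' b' t' | a' s' b' t'. (a', s') \<in> frac R a s \<and> (b', t') \<in> frac R b t} = F a s b t"
proof -
  have self: "(a, s) \<in> frac R a s" "(b, t) \<in> frac R b t"
    using assms by (simp_all add: mem_frac_iff frac_rel_iff)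
  have "{F a' s' b' t' | a' s' b' t'. (a', s') \<in> frac R a s \<and> (b', t') \<in> frac R b t} = {F a s b t}"
  proof (intro equalityI subsetI)
    fix C assume "C \<in> {F a' s' b' t' | a' s' b' t'. (a', s') \<in> frac R a s \<and> (b', t') \<in> frac R b t}"
    then obtain a' s' b' t' where "C = F a' s' b' t'"
      and "((a, s), (a', s')) \<in> frac_rel R" "((b, t), (b', t')) \<in> frac_rel R"
      unfolding mem_frac_iff by blast
    then show "C \<in> {F a s b t}" using compat by simp
  qed (use self in blast)
  then show ?thesis by simp
qed

lemma q_ring_mult_frac:
  assumes [simp]: "a \<in> carrier R" "s \<in> regular R" "b \<in> carrier R" "t \<in> regular R"
  shows "frac R a s \<otimes>\<^bsub>q_ring R\<^esub> frac R b t = frac R (a \<otimes> b) (s \<otimes> t)"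
  unfolding q_ring_def q_mult_def monoid.simps
proof (rule Union_frac_representatives, simp_all)
  fix a' s' b' t'
  assume "((a, s), (a', s')) \<in> frac_rel R" "((b, t), (b', t')) \<in> frac_rel R"
  moreover have [simp]: "a' \<in> carrier R" "s' \<in> regular R" "b' \<in> carrier R" "t' \<in> regular R"
    using calculation by (auto dest: frac_rel_domain)
  ultimately have eqs: "a \<otimes> s' = a' \<otimes> s" "b \<otimes> t' = b' \<otimes> t" by (simp_all add: frac_rel_iff)
  have carr: "s \<in> carrier R" "t \<in> carrier R" "s' \<in> carrier R" "t' \<in> carrier R"
    "a \<in> carrier R" "b \<in> carrier R" "a' \<in> carrier R" "b' \<in> carrier R"
    by (simp_all add: regular_closed)
  have "a' \<otimes> b' \<otimes> (s \<otimes> t) = (a' \<otimes> s) \<otimes> (b' \<otimes> t)" using carr by algebra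
  also have "\<dots> = (a \<otimes> s') \<otimes> (b \<otimes> t')" by (simp only: eqs)
  also have "\<dots> = a \<otimes> b \<otimes> (s' \<otimes> t')" using carr by algebra
  finally have eq: "a' \<otimes> b' \<otimes> (s \<otimes> t) = a \<otimes> b \<otimes> (s' \<otimes> t')" .
  have "a' \<otimes> b' \<in> carrier R" "s' \<otimes> t' \<in> regular R" "a \<otimes> b \<in> carrier R" "s \<otimes> t \<in> regular R"
    using carr by (simp_all add: regular_mult)
  from frac_eq_iff[OF this] eq
  show "frac R (a' \<otimes> b') (s' \<otimes> t') = frac R (a \<otimes> b) (s \<otimes> t)" by simp
qed

lemma q_ring_add_frac:
  assumes [simp]: "a \<in> carrier R" "s \<in> regular R" "b \<in> carrier R" "t \<in> regular R"
  shows "frac R a s \<oplus>\<^bsub>q_ring R\<^esub> frac R b t = frac R (a \<otimes> t \<oplus> b \<otimes> s) (s \<otimes> t)"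
  unfolding q_ring_def q_add_def ring.simps
proof (rule Union_frac_representatives, simp_all)
  fix a' s' b' t'
  assume "((a, s), (a', s')) \<in> frac_rel R" "((b, t), (b', t')) \<in> frac_rel R"
  moreover have [simp]: "a' \<in> carrier R" "s' \<in> regular R" "b' \<in> carrier R" "t' \<in> regular R"
    using calculation by (auto dest: frac_rel_domain)
  ultimately have eqs: "a \<otimes> s' = a' \<otimes> s" "b \<otimes> t' = b' \<otimes> t" by (simp_all add: frac_rel_iff)
  have carr: "s \<in> carrier R" "t \<in> carrier R" "s' \<in> carrier R" "t' \<in> carrier R"
    "a \<in> carrier R" "b \<in> carrier R" "a' \<in> carrier R" "b' \<in> carrier R"
    by (simp_all add: regular_closed)
  have "(a' \<otimes> t' \<oplus> b' \<otimes> s') \<otimes> (s \<otimes> t) = (a' \<otimes> s) \<otimes> (t' \<otimes> t) \<oplus> (b' \<otimes> t) \<otimes> (s' \<otimes> s)"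
    using carr by algebra
  also have "\<dots> = (a \<otimes> s') \<otimes> (t' \<otimes> t) \<oplus> (b \<otimes> t') \<otimes> (s' \<otimes> s)" by (simp only: eqs)
  also have "\<dots> = (a \<otimes> t \<oplus> b \<otimes> s) \<otimes> (s' \<otimes> t')" using carr by algebra
  finally have eq: "(a' \<otimes> t' \<oplus> b' \<otimes> s') \<otimes> (s \<otimes> t) = (a \<otimes> t \<oplus> b \<otimes> s) \<otimes> (s' \<otimes> t')" .
  have "a' \<otimes> t' \<oplus> b' \<otimes> s' \<in> carrier R" "s' \<otimes> t' \<in> regular R"
    "a \<otimes> t \<oplus> b \<otimes> s \<in> carrier R" "s \<otimes> t \<in> regular R"
    using carr by (simp_all add: regular_mult)
  from frac_eq_iff[OF this] eq
  show "frac R (a' \<otimes> t' \<oplus> b' \<otimes> s') (s' \<otimes> t') = frac R (a \<otimes> t \<oplus> b \<otimes> s) (s \<otimes> t)"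
    by simp
qed

lemma q_ring_pow_frac:
  assumes "a \<in> carrier R" "s \<in> regular R"
  shows "frac R a s [^]\<^bsub>q_ring R\<^esub> (n::nat) = frac R (a [^] n) (s [^] n)"
proof (induct n)
  case 0
  show ?case by (simp add: q_ring_def)
next
  case (Suc n)
  then show ?case using assms by (simp add: q_ring_mult_frac regular_pow)
qed

lemma frac_eq_q_ring_zero_iff:
  assumes "a \<in> carrier R" "s \<in> regular R"
  shows "frac R a s = \<zero>\<^bsub>q_ring R\<^esub> \<longleftrightarrow> a = \<zero>"
  using assms by (simp add: q_ring_def frac_eq_iff one_regular regular_closed)

lemma frac_nilradical_iff:
  assumes "a \<in> carrier R" "s \<in> regular R"
  shows "frac R a s \<in> nilradical (q_ring R) \<longleftrightarrow> a \<in> nilradical R"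
  using assms by (simp add: nilradical_def q_ring_pow_frac frac_eq_q_ring_zero_iff
      frac_in_carrier_q_ring regular_pow)

lemma frac_regular_iff:
  assumes a: "a \<in> carrier R" and s: "s \<in> regular R"
  shows "frac R a s \<in> regular (q_ring R) \<longleftrightarrow> a \<in> regular R"
proof
  assume reg: "frac R a s \<in> regular (q_ring R)"
  show "a \<in> regular R" unfolding regular_def
  proof (intro CollectI conjI ballI impI)
    fix b assume b: "b \<in> carrier R" "a \<otimes> b = \<zero>"
    then have "frac R a s \<otimes>\<^bsub>q_ring R\<^esub> frac R b \<one> = \<zero>\<^bsub>q_ring R\<^esub>"
      using a s by (simp add: q_ring_mult_frac frac_eq_q_ring_zero_iff one_regular regular_mult)
    then have "frac R b \<one> = \<zero>\<^bsub>q_ring R\<^esub>"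
      using reg b by (simp add: regular_def frac_in_carrier_q_ring one_regular)
    then show "b = \<zero>" using b by (simp add: frac_eq_q_ring_zero_iff one_regular)
  qed (rule a)
next
  assume reg: "a \<in> regular R"
  show "frac R a s \<in> regular (q_ring R)" unfolding regular_def
  proof (intro CollectI conjI ballI impI)
    fix Z assume "Z \<in> carrier (q_ring R)" and Z: "frac R a s \<otimes>\<^bsub>q_ring R\<^esub> Z = \<zero>\<^bsub>q_ring R\<^esub>"
    then obtain c t where ct: "Z = frac R c t" "c \<in> carrier R" "t \<in> regular R"
      by (auto simp: carrier_q_ring)
    then have "a \<otimes> c = \<zero>"
      using Z a s by (simp add: q_ring_mult_frac frac_eq_q_ring_zero_iff regular_mult)
    then show "Z = \<zero>\<^bsub>q_ring R\<^esub>"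
      using ct regular_mult_zeroD[OF reg] by (simp add: frac_eq_q_ring_zero_iff)
  qed (simp add: a s frac_in_carrier_q_ring)
qed

lemma frac_complemented_iff:
  assumes a: "a \<in> carrier R" and s: "s \<in> regular R"
  shows "complemented (q_ring R) (frac R a s) \<longleftrightarrow> complemented R a"
proof
  assume "complemented (q_ring R) (frac R a s)"
  then obtain Z where "Z \<in> carrier (q_ring R)" and Z: "frac R a s \<otimes>\<^bsub>q_ring R\<^esub> Z = \<zero>\<^bsub>q_ring R\<^esub>"
      "frac R a s \<oplus>\<^bsub>q_ring R\<^esub> Z \<in> regular (q_ring R)"
    unfolding complemented_def by blast
  then obtain b t where Z_eq: "Z = frac R b t" and b: "b \<in> carrier R" and t: "t \<in> regular R"
    by (auto simp: carrier_q_ring)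
  have sc: "s \<in> carrier R" and tc: "t \<in> carrier R" using s t by (simp_all add: regular_closed)
  have "a \<otimes> b = \<zero>"
    using Z(1) a b s t by (simp add: Z_eq q_ring_mult_frac frac_eq_q_ring_zero_iff regular_mult)
  then have ab: "a \<otimes> (b \<otimes> s) = \<zero>" using a b sc by (simp flip: m_assoc)
  have "a \<otimes> t \<oplus> b \<otimes> s \<in> regular R"
    using Z(2) a b s t sc tc by (simp add: Z_eq q_ring_add_frac frac_regular_iff regular_mult)
  then have "a \<oplus> b \<otimes> s \<in> regular R"
    using regular_add_of_mult_eq_zero[OF a _ tc ab] b sc by simp
  then show "complemented R a" unfolding complemented_def using ab b sc by blast
next
  assume "complemented R a"
  then obtain b where b: "b \<in> carrier R" and ab: "a \<otimes> b = \<zero>" and reg: "a \<oplus> b \<in> regular R"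
    unfolding complemented_def by blast
  have sc: "s \<in> carrier R" using s by (rule regular_closed)
  have "frac R a s \<otimes>\<^bsub>q_ring R\<^esub> frac R b s = \<zero>\<^bsub>q_ring R\<^esub>"
    using a b s ab by (simp add: q_ring_mult_frac frac_eq_q_ring_zero_iff regular_mult)
  moreover have "a \<otimes> s \<oplus> b \<otimes> s = (a \<oplus> b) \<otimes> s" using a b sc by algebra
  then have "frac R a s \<oplus>\<^bsub>q_ring R\<^esub> frac R b s \<in> regular (q_ring R)"
    using a b s sc reg by (simp add: q_ring_add_frac frac_regular_iff regular_mult)
  ultimately show "complemented (q_ring R) (frac R a s)"
    unfolding complemented_def using b s by (blast intro: frac_in_carrier_q_ring)
qed

end

theorem mainTheorem5:
  fixes R :: "('a, 'b) ring_scheme"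
  assumes "cring R"
  shows "semi_complemented R \<longleftrightarrow> semi_complemented (q_ring R)"
proof -
  interpret cring R by fact
  show ?thesis
  proof
    assume sc: "semi_complemented R"
    show "semi_complemented (q_ring R)" unfolding semi_complemented_def
    proof
      fix W assume W: "W \<in> carrier (q_ring R) - nilradical (q_ring R)"
      then obtain a s where "W = frac R a s" "a \<in> carrier R" "s \<in> regular R"
        by (auto simp: carrier_q_ring)
      with W sc show "complemented (q_ring R) W"
        by (simp add: semi_complemented_def frac_nilradical_iff frac_complemented_iff)
    qed
  next
    assume q: "semi_complemented (q_ring R)"
    show "semi_complemented R" unfolding semi_complemented_def
    proof
      fix a assume a: "a \<in> carrier R - nilradical R"
      then have "frac R a \<one>\<^bsub>R\<^esub> \<in> carrier (q_ring R) - nilradical (q_ring R)"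
        by (simp add: frac_in_carrier_q_ring frac_nilradical_iff one_regular)
      then have "complemented (q_ring R) (frac R a \<one>\<^bsub>R\<^esub>)"
        using q by (simp add: semi_complemented_def)
      then show "complemented R a"
        using a frac_complemented_iff[OF _ one_regular] by blast
    qed
  qed
qed

end
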